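(* Let $(d_i)_{i\ge1}$ be an infinite alternate Lyndon word, $M$ its alternate Lyndon system, $L_M$ its language and $H_n$ the number of words of length $n$ in $L_M$. Let $A(n)=a_1\cdots a_n$ and $B(n)=b_1\cdots b_n$ be two words of length $n$ in $L_M$ with $A(n)\prec B(n)$, and let $\Gamma_{A,B}(n)$ be the cardinality of the set of words $X=x_1\cdots x_n\in L_M$ of length $n$ with $A(n)\preceq X\preceq B(n)$. Then $$\Gamma_{A,B}(n)=\sum_{i=1}^{n}(-1)^i(b_i-a_i)H_{n-i}+1.$$
   Context: Alternate order: for two words $x=x_1x_2\cdots$, $y=y_1y_2\cdots$ (both infinite, or both finite of the same length) over a finite alphabet $\{0,\dots,d\}$, $x\prec y$ iff there is $k$ with $x_i=y_i$ for all $i<k$ and $(-1)^k(x_k-y_k)<0$; $x\preceq y$ iff $x=y$ or $x\prec y$. An alternate Lyndon word is an infinite word $(d_i)_{i\ge1}$ with $d_1d_2\cdots\preceq d_nd_{n+1}\cdots$ for all $n\ge1$. Its alternate Lyndon system $M$ is the set of infinite words $x_1x_2\cdots$ over $\{0,\dots,d_1\}$ with $d_1d_2\cdots\preceq x_kx_{k+1}\cdots$ for all $k\ge1$; $L_M$ is the set of finite factors of elements of $M$; $H_0=1$. *)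

theory Defs
  imports Main
begin

text \<open>Infinite words are functions nat => nat, with x 0 the first letter x_1.
  Finite words are lists, with w ! 0 the first letter w_1.
  The 0-based position k corresponds to the 1-based position k+1, hence the
  sign (-1)^(k+1).\<close>

definition alt_less_inf :: "(nat \<Rightarrow> nat) \<Rightarrow> (nat \<Rightarrow> nat) \<Rightarrow> bool" where
  "alt_less_inf x y \<longleftrightarrow>
     (\<exists>k. (\<forall>i<k. x i = y i) \<and> (-1::int)^(k+1) * (int (x k) - int (y k)) < 0)"

definition alt_le_inf :: "(nat \<Rightarrow> nat) \<Rightarrow> (nat \<Rightarrow> nat) \<Rightarrow> bool" where
  "alt_le_inf x y \<longleftrightarrow> x = y \<or> alt_less_inf x y"

definition alt_less :: "nat list \<Rightarrow> nat list \<Rightarrow> bool" where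
  "alt_less x y \<longleftrightarrow> length x = length y \<and>
     (\<exists>k<length x. (\<forall>i<k. x ! i = y ! i) \<and> (-1::int)^(k+1) * (int (x ! k) - int (y ! k)) < 0)"

definition alt_le :: "nat list \<Rightarrow> nat list \<Rightarrow> bool" where
  "alt_le x y \<longleftrightarrow> x = y \<or> alt_less x y"

definition shift :: "(nat \<Rightarrow> nat) \<Rightarrow> nat \<Rightarrow> nat \<Rightarrow> nat" where
  "shift x n = (\<lambda>i. x (i + n))"

definition alt_lyndon :: "(nat \<Rightarrow> nat) \<Rightarrow> bool" where
  "alt_lyndon d \<longleftrightarrow> (\<forall>n. alt_le_inf d (shift d n))"

definition alt_lyndon_system :: "(nat \<Rightarrow> nat) \<Rightarrow> (nat \<Rightarrow> nat) set" where
  "alt_lyndon_system d = {x. (\<forall>i. x i \<le> d 0) \<and> (\<forall>k. alt_le_inf d (shift x k))}"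

definition lang :: "(nat \<Rightarrow> nat) \<Rightarrow> nat list set" where
  "lang d = {w. \<exists>x\<in>alt_lyndon_system d. \<exists>k. w = map x [k..<k + length w]}"

definition H :: "(nat \<Rightarrow> nat) \<Rightarrow> nat \<Rightarrow> nat" where
  "H d n = card {w \<in> lang d. length w = n}"

definition Gamma :: "(nat \<Rightarrow> nat) \<Rightarrow> nat list \<Rightarrow> nat list \<Rightarrow> nat" where
  "Gamma d A B = card {X \<in> lang d. length X = length A \<and> alt_le A X \<and> alt_le X B}"

end

theory Submission
  imports Defs
begin

text \<open>Let rank W be the number of words of L_M that have the length of W and lie strictly
  below W. Then Gamma_{A,B} = rank B - rank A + 1, so it suffices to show that rank W equals
  the alternating sum sum_k (-1)^(k+1) W_k H_{n-1-k} up to a constant depending only on n.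
  Split off the first letter, W = cY. Since the alternate order puts a larger first
  letter lower, the words of length n whose first letter is at least c are the words below cY,
  cY itself, and the words cY' with Y' below Y; the latter all lie in L_M, because replacing
  the tail of an element of M by a word that is smaller in the alternate order keeps it
  above d. Counting the words by their first letter, the number of words with first letter
  at least c is affine in c with slope -H_{n-1}, so
  rank (cY) + rank Y = const - c H_{n-1}, and the claim follows by induction on n.\<close>

lemma alt_less_inf_trans:
  assumes "alt_less_inf x y" "alt_less_inf y z"
  shows "alt_less_inf x z"
proof -
  obtain k where k: "\<forall>i<k. x i = y i" "(-1::int)^(k+1) * (int (x k) - int (y k)) < 0"
    using assms(1) unfolding alt_less_inf_def by blast
  obtain l where l: "\<forall>i<l. y i = z i" "(-1::int)^(l+1) * (int (y l) - int (z l)) < 0"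
    using assms(2) unfolding alt_less_inf_def by blast
  have "(\<forall>i<min k l. x i = z i) \<and>
      (-1::int)^(min k l + 1) * (int (x (min k l)) - int (z (min k l))) < 0"
  proof (cases k l rule: linorder_cases)
    case equal
    then show ?thesis using k l by (simp add: right_diff_distrib)
  qed (use k l in auto)
  then show ?thesis unfolding alt_less_inf_def by blast
qed

lemma alt_le_less_inf_trans: "alt_le_inf x y \<Longrightarrow> alt_less_inf y z \<Longrightarrow> alt_less_inf x z"
  unfolding alt_le_inf_def using alt_less_inf_trans by blast

lemma alt_less_inf_if_alt_less_prefix:
  assumes "alt_less (map x [0..<n]) (map y [0..<n])"
  shows "alt_less_inf x y"
proof -
  obtain k where "k < n" "\<forall>i<k. x i = y i" "(-1::int)^(k+1) * (int (x k) - int (y k)) < 0"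
    using assms unfolding alt_less_def by auto
  then show ?thesis unfolding alt_less_inf_def by blast
qed

lemma alt_less_Nil [simp]: "\<not> alt_less [] y" "\<not> alt_less x []"
  unfolding alt_less_def by auto

lemma alt_less_length: "alt_less x y \<Longrightarrow> length x = length y"
  unfolding alt_less_def by simp

lemma alt_less_Cons:
  "alt_less (a # x) (b # y) \<longleftrightarrow> length x = length y \<and> (b < a \<or> a = b \<and> alt_less y x)"
proof
  assume "alt_less (a # x) (b # y)"
  then obtain k where k: "k < Suc (length x)" "length x = length y"
    "\<forall>i<k. (a # x) ! i = (b # y) ! i"
    "(-1::int)^(k+1) * (int ((a # x) ! k) - int ((b # y) ! k)) < 0"
    unfolding alt_less_def by auto
  show "length x = length y \<and> (b < a \<or> a = b \<and> alt_less y x)"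
  proof (cases k)
    case (Suc m)
    have "\<forall>i<m. y ! i = x ! i" using k(3) Suc by (metis Suc_mono nth_Cons_Suc)
    moreover have "(-1::int)^(m+1) * (int (y ! m) - int (x ! m)) < 0"
      using k(4) Suc by (simp add: algebra_simps)
    ultimately have "alt_less y x" unfolding alt_less_def using k(1,2) Suc by auto
    moreover have "a = b" using k(3) Suc by (metis nth_Cons_0 zero_less_Suc)
    ultimately show ?thesis using k(2) by simp
  qed (use k in simp)
next
  assume h: "length x = length y \<and> (b < a \<or> a = b \<and> alt_less y x)"
  show "alt_less (a # x) (b # y)"
  proof (cases "b < a")
    case True
    then show ?thesis unfolding alt_less_def using h by (intro conjI exI[of _ 0]) auto
  next
    case False
    then have "a = b" and "alt_less y x" using h by auto
    then obtain m where m: "a = b" "m < length y" "\<forall>i<m. y ! i = x ! i"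
      "(-1::int)^(m+1) * (int (y ! m) - int (x ! m)) < 0"
      unfolding alt_less_def by auto
    have "\<forall>i<Suc m. (a # x) ! i = (b # y) ! i" using m(1,3) by (auto simp: less_Suc_eq_0_disj)
    moreover have "(-1::int)^(Suc m + 1) * (int ((a # x) ! Suc m) - int ((b # y) ! Suc m)) < 0"
      using m(4) by (simp add: algebra_simps)
    ultimately show ?thesis unfolding alt_less_def using h m(2)
      by (intro conjI exI[of _ "Suc m"]) auto
  qed
qed

lemma alt_less_irrefl: "\<not> alt_less x x"
  by (induction x) (auto simp: alt_less_Cons)

lemma alt_less_trans: "alt_less x y \<Longrightarrow> alt_less y z \<Longrightarrow> alt_less x z"
proof (induction "length x" arbitrary: x y z)
  case (Suc n)
  obtain a x' b y' c z' where xyz: "x = a # x'" "y = b # y'" "z = c # z'"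
    using Suc.prems Suc.hyps(2) alt_less_length by (metis length_Suc_conv)
  have xy: "length x' = length y'" "b < a \<or> a = b \<and> alt_less y' x'"
    and yz: "length y' = length z'" "c < b \<or> b = c \<and> alt_less z' y'"
    using Suc.prems unfolding xyz alt_less_Cons by auto
  have "length z' = n" using Suc.hyps(2) xy(1) yz(1) xyz(1) by simp
  then have "alt_less z' y' \<Longrightarrow> alt_less y' x' \<Longrightarrow> alt_less z' x'" using Suc.hyps(1) by blast
  then have "c < a \<or> a = c \<and> alt_less z' x'" using xy(2) yz(2) by auto
  then show ?case using xy(1) yz(1) unfolding xyz alt_less_Cons by simp
qed simp

lemma alt_less_linear:
  "length x = length y \<Longrightarrow> x \<noteq> y \<Longrightarrow> alt_less x y \<or> alt_less y x"
proof (induction x arbitrary: y)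
  case (Cons a x)
  then obtain b y' where "y = b # y'" by (cases y) auto
  with Cons show ?case by (cases "a = b") (auto simp: alt_less_Cons)
qed simp

lemma shift_shift: "shift (shift x k) l = shift x (l + k)"
  unfolding shift_def by (simp add: add.assoc)

lemma shift_in_alt_lyndon_system:
  "x \<in> alt_lyndon_system d \<Longrightarrow> shift x k \<in> alt_lyndon_system d"
  unfolding alt_lyndon_system_def by (auto simp: shift_shift) (simp add: shift_def)

lemma shift_case_nat_Suc: "shift (case_nat c y) (Suc k) = shift y k"
  unfolding shift_def by simp

lemma case_nat_in_alt_lyndon_system:
  assumes "y \<in> alt_lyndon_system d" "c \<le> d 0" "alt_le_inf d (case_nat c y)"
  shows "case_nat c y \<in> alt_lyndon_system d"
  unfolding alt_lyndon_system_def
proof (intro CollectI conjI allI)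
  show "case_nat c y i \<le> d 0" for i
    using assms(1,2) unfolding alt_lyndon_system_def by (cases i) auto
  show "alt_le_inf d (shift (case_nat c y) k)" for k
    using assms(1,3) unfolding alt_lyndon_system_def
    by (cases k) (auto simp: shift_case_nat_Suc, simp add: shift_def)
qed

lemma map_case_nat_upt: "map (case_nat c y) [0..<Suc n] = c # map y [0..<n]"
  by (induction n) auto

lemma map_shift_upt: "map (shift x k) [0..<n] = map x [k..<k + n]"
  by (rule nth_equalityI) (simp_all add: shift_def add.commute)

lemma lang_iff_prefix:
  "w \<in> lang d \<longleftrightarrow> (\<exists>x\<in>alt_lyndon_system d. w = map x [0..<length w])"
proof
  assume "w \<in> lang d"
  then obtain x k where x: "x \<in> alt_lyndon_system d" "w = map x [k..<k + length w]"
    unfolding lang_def by blast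
  then have "w = map (shift x k) [0..<length w]" by (simp only: map_shift_upt)
  then show "\<exists>x\<in>alt_lyndon_system d. w = map x [0..<length w]"
    using x(1) shift_in_alt_lyndon_system by blast
next
  assume "\<exists>x\<in>alt_lyndon_system d. w = map x [0..<length w]"
  then obtain x where "x \<in> alt_lyndon_system d" "w = map x [0..<0 + length w]" by auto
  then show "w \<in> lang d" unfolding lang_def by blast
qed

lemma lang_letter_le:
  assumes "w \<in> lang d" "a \<in> set w"
  shows "a \<le> d 0"
proof -
  obtain x where "\<forall>i. x i \<le> d 0" "w = map x [0..<length w]"
    using assms(1) unfolding lang_iff_prefix alt_lyndon_system_def by blast
  then show ?thesis using assms(2) by (metis ex_map_conv)
qed

lemma Cons_in_langD: "c # w \<in> lang d \<Longrightarrow> w \<in> lang d"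
proof -
  assume "c # w \<in> lang d"
  then obtain x where x: "x \<in> alt_lyndon_system d" "c # w = map x [0..<Suc (length w)]"
    unfolding lang_iff_prefix by auto
  have "map x [0..<Suc (length w)] = x 0 # map (shift x 1) [0..<length w]"
    by (simp only: map_shift_upt upt_conv_Cons zero_less_Suc list.map) simp
  then show "w \<in> lang d"
    using x shift_in_alt_lyndon_system unfolding lang_iff_prefix by auto
qed

lemma Cons_in_lang_if_alt_less_inf:
  assumes "y \<in> alt_lyndon_system d" "w = map y [0..<length w]" "c \<le> d 0"
    and "alt_less_inf d (case_nat c y)"
  shows "c # w \<in> lang d"
proof -
  have "case_nat c y \<in> alt_lyndon_system d"
    using assms case_nat_in_alt_lyndon_system unfolding alt_le_inf_def by blast
  moreover have "c # w = map (case_nat c y) [0..<length (c # w)]"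
    using assms(2) by (simp only: length_Cons map_case_nat_upt)
  ultimately show ?thesis by (auto simp: lang_iff_prefix)
qed

lemma Cons_in_lang_if_less:
  assumes "w \<in> lang d" "c < d 0"
  shows "c # w \<in> lang d"
proof -
  obtain y where "y \<in> alt_lyndon_system d" "w = map y [0..<length w]"
    using assms(1) unfolding lang_iff_prefix by blast
  moreover have "alt_less_inf d (case_nat c y)"
    unfolding alt_less_inf_def using assms(2) by (intro exI[of _ 0]) simp
  ultimately show ?thesis using Cons_in_lang_if_alt_less_inf assms(2) by simp
qed

lemma Cons_in_lang_if_alt_less:
  assumes "c # w \<in> lang d" "v \<in> lang d" "alt_less v w"
  shows "c # v \<in> lang d"
proof -
  have len: "length v = length w" using assms(3) by (rule alt_less_length)
  from assms(1) obtain u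
    where u: "u \<in> alt_lyndon_system d" "c # w = map u [0..<length (c # w)]"
    unfolding lang_iff_prefix ..
  from assms(2) obtain y where y: "y \<in> alt_lyndon_system d" "v = map y [0..<length v]"
    unfolding lang_iff_prefix ..
  have "alt_less (c # w) (c # v)"
    using assms(3) len by (simp only: alt_less_Cons simp_thms)
  moreover have "c # v = map (case_nat c y) [0..<length (c # w)]"
    using y(2) len by (simp only: length_Cons map_case_nat_upt)
  ultimately have "alt_less_inf u (case_nat c y)"
    using u(2) by (metis alt_less_inf_if_alt_less_prefix)
  moreover have "alt_le_inf d (shift u 0)" using u(1) unfolding alt_lyndon_system_def by blast
  then have "alt_le_inf d u" by (simp add: shift_def)
  ultimately have "alt_less_inf d (case_nat c y)" using alt_le_less_inf_trans by blast
  moreover have "c \<le> d 0" using assms(1) lang_letter_le by simp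
  ultimately show ?thesis using Cons_in_lang_if_alt_less_inf y by blast
qed

definition lang_of_length :: "(nat \<Rightarrow> nat) \<Rightarrow> nat \<Rightarrow> nat list set" where
  "lang_of_length d n = {w \<in> lang d. length w = n}"

lemma H_eq_card_lang_of_length: "H d n = card (lang_of_length d n)"
  unfolding H_def lang_of_length_def ..

lemma finite_lang_of_length: "finite (lang_of_length d n)"
proof (rule finite_subset)
  show "lang_of_length d n \<subseteq> {w. set w \<subseteq> {..d 0} \<and> length w = n}"
    unfolding lang_of_length_def using lang_letter_le by fastforce
  show "finite {w. set w \<subseteq> {..d 0} \<and> length w = n}"
    by (rule finite_lists_length_eq) simp
qed

lemma lang_of_length_SucE:
  assumes "w \<in> lang_of_length d (Suc n)"
  obtains c v where "w = c # v" "c \<le> d 0" "v \<in> lang_of_length d n"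
proof -
  obtain c v where w: "w = c # v" using assms unfolding lang_of_length_def by (cases w) auto
  then have "c \<le> d 0" "v \<in> lang_of_length d n"
    using assms lang_letter_le Cons_in_langD unfolding lang_of_length_def by auto
  with w that show ?thesis by blast
qed

lemma card_lang_of_length_hd_ge:
  assumes "c \<le> d 0"
  shows "card {w \<in> lang_of_length d (Suc n). c \<le> hd w}
    = card {v \<in> lang_of_length d n. d 0 # v \<in> lang d} + (d 0 - c) * H d n"
  using assms
proof (induction c rule: inc_induct)
  case base
  have "{w \<in> lang_of_length d (Suc n). d 0 \<le> hd w}
      = (#) (d 0) ` {v \<in> lang_of_length d n. d 0 # v \<in> lang d}"
  proof (intro equalityI subsetI)
    fix w assume w: "w \<in> {w \<in> lang_of_length d (Suc n). d 0 \<le> hd w}"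
    then obtain c v where "w = c # v" "c \<le> d 0" "v \<in> lang_of_length d n"
      by (auto elim: lang_of_length_SucE)
    with w show "w \<in> (#) (d 0) ` {v \<in> lang_of_length d n. d 0 # v \<in> lang d}"
      unfolding lang_of_length_def by auto
  qed (auto simp: lang_of_length_def)
  then show ?case by (simp add: card_image)
next
  case (step c)
  have split: "{w \<in> lang_of_length d (Suc n). c \<le> hd w}
      = {w \<in> lang_of_length d (Suc n). Suc c \<le> hd w} \<union> (#) c ` lang_of_length d n"
  proof (intro equalityI subsetI)
    fix w assume w: "w \<in> {w \<in> lang_of_length d (Suc n). c \<le> hd w}"
    then obtain a v where "w = a # v" "v \<in> lang_of_length d n"
      by (auto elim: lang_of_length_SucE)
    with w show
      "w \<in> {w \<in> lang_of_length d (Suc n). Suc c \<le> hd w} \<union> (#) c ` lang_of_length d n"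
      by (cases "a = c") auto
  qed (use step.hyps Cons_in_lang_if_less in \<open>auto simp: lang_of_length_def\<close>)
  have "card ((#) c ` lang_of_length d n) = H d n"
    by (simp add: card_image H_eq_card_lang_of_length)
  moreover have "card {w \<in> lang_of_length d (Suc n). c \<le> hd w}
      = card {w \<in> lang_of_length d (Suc n). Suc c \<le> hd w} + card ((#) c ` lang_of_length d n)"
    unfolding split by (rule card_Un_disjoint) (auto simp: finite_lang_of_length)
  moreover have "d 0 - c = Suc (d 0 - Suc c)"
    using step.hyps(2) by (rule Suc_diff_Suc[symmetric])
  ultimately show ?case using step.IH by simp
qed

lemma lang_of_length_hd_ge_eq:
  assumes "c # w \<in> lang d"
  shows "{v \<in> lang_of_length d (Suc (length w)). c \<le> hd v}
    = {v \<in> lang_of_length d (Suc (length w)). alt_less v (c # w)}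
      \<union> insert (c # w) ((#) c ` {u \<in> lang_of_length d (length w). alt_less u w})"
    (is "?ge = ?below \<union> insert (c # w) ((#) c ` ?below')")
proof (intro equalityI subsetI)
  fix v assume v: "v \<in> ?ge"
  then obtain a u where vu: "v = a # u" "u \<in> lang_of_length d (length w)"
    by (auto elim: lang_of_length_SucE)
  have lu: "length u = length w" using vu(2) unfolding lang_of_length_def by simp
  consider "c < a" | "a = c" "u = w" | "a = c" "alt_less u w" | "a = c" "alt_less w u"
    using v vu lu alt_less_linear by fastforce
  then show "v \<in> ?below \<union> insert (c # w) ((#) c ` ?below')"
  proof cases
    case 1
    then have "alt_less v (c # w)" using vu(1) lu by (simp add: alt_less_Cons)
    then show ?thesis using v by simp
  next
    case 2
    then show ?thesis using vu(1) by simp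
  next
    case 3
    then show ?thesis using vu by simp
  next
    case 4
    then have "alt_less v (c # w)" using vu(1) lu by (simp add: alt_less_Cons)
    then show ?thesis using v by simp
  qed
next
  fix v assume "v \<in> ?below \<union> insert (c # w) ((#) c ` ?below')"
  then consider "v \<in> ?below" | "v = c # w" | u where "v = c # u" "u \<in> ?below'" by blast
  then show "v \<in> ?ge"
  proof cases
    case 1
    then obtain a u where "v = a # u" "alt_less (a # u) (c # w)"
      by (auto elim: lang_of_length_SucE)
    then show ?thesis using 1 unfolding alt_less_Cons by auto
  next
    case 2
    then show ?thesis using assms unfolding lang_of_length_def by simp
  next
    case 3
    then have "c # u \<in> lang d"
      using assms Cons_in_lang_if_alt_less unfolding lang_of_length_def by blast
    then show ?thesis using 3 unfolding lang_of_length_def by simp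
  qed
qed

definition rank :: "(nat \<Rightarrow> nat) \<Rightarrow> nat list \<Rightarrow> nat" where
  "rank d w = card {v \<in> lang_of_length d (length w). alt_less v w}"

lemma rank_Cons:
  assumes "c # w \<in> lang d"
  shows "rank d (c # w) + 1 + rank d w
    = card {v \<in> lang_of_length d (Suc (length w)). c \<le> hd v}"
proof -
  define below where "below = {v \<in> lang_of_length d (Suc (length w)). alt_less v (c # w)}"
  define below' where "below' = {u \<in> lang_of_length d (length w). alt_less u w}"
  have "c # w \<notin> below" "c # w \<notin> (#) c ` below'"
    using alt_less_irrefl unfolding below_def below'_def by auto
  moreover have "below \<inter> (#) c ` below' = {}"
  proof -
    have False if "alt_less (c # u) (c # w)" "alt_less u w" for u
      using that alt_less_trans alt_less_irrefl unfolding alt_less_Cons by blast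
    then show ?thesis unfolding below_def below'_def by auto
  qed
  moreover have "finite below" "finite below'"
    unfolding below_def below'_def using finite_lang_of_length by auto
  ultimately have "card (below \<union> insert (c # w) ((#) c ` below'))
      = card below + (card below' + 1)"
    by (simp add: card_Un_disjoint card_image)
  moreover have "card below = rank d (c # w)" "card below' = rank d w"
    unfolding below_def below'_def rank_def by simp_all
  ultimately show ?thesis
    unfolding lang_of_length_hd_ge_eq[OF assms] below_def below'_def by simp
qed

definition alt_weight :: "(nat \<Rightarrow> nat) \<Rightarrow> nat list \<Rightarrow> int" where
  "alt_weight d w = (\<Sum>k<length w. (-1)^(k+1) * int (w ! k) * int (H d (length w - 1 - k)))"

lemma alt_weight_Nil [simp]: "alt_weight d [] = 0"
  unfolding alt_weight_def by simp

lemma alt_weight_Cons: "alt_weight d (c # w) = - int c * int (H d (length w)) - alt_weight d w"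
  unfolding alt_weight_def
  by (simp add: sum.lessThan_Suc_shift sum_negf[symmetric] del: sum.lessThan_Suc)

lemma rank_eq_alt_weight_plus_const:
  "\<exists>C. \<forall>w\<in>lang_of_length d n. int (rank d w) = alt_weight d w + C"
proof (induction n)
  case 0
  have "rank d [] = 0" unfolding rank_def by simp
  then show ?case unfolding lang_of_length_def by (intro exI[of _ 0]) simp
next
  case (Suc n)
  then obtain C where C: "\<forall>w\<in>lang_of_length d n. int (rank d w) = alt_weight d w + C" ..
  define t where "t = card {v \<in> lang_of_length d n. d 0 # v \<in> lang d}"
  have "int (rank d (c # w)) = alt_weight d (c # w) + (int t + int (d 0) * int (H d n) - 1 - C)"
    if "c # w \<in> lang_of_length d (Suc n)" for c w
  proof -
    have cw: "c # w \<in> lang d" "length w = n" "c \<le> d 0"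
      using that lang_letter_le unfolding lang_of_length_def by auto
    have "rank d (c # w) + 1 + rank d w = t + (d 0 - c) * H d n"
      using rank_Cons[OF cw(1)] card_lang_of_length_hd_ge[of c d n, OF cw(3)] cw(2)
      unfolding t_def by simp
    then have "int (rank d (c # w)) + 1 + int (rank d w)
        = int t + (int (d 0) - int c) * int (H d n)"
      using cw(3) by (metis of_nat_add of_nat_diff of_nat_mult of_nat_1)
    moreover have "int (rank d w) = alt_weight d w + C"
      using C cw Cons_in_langD unfolding lang_of_length_def by blast
    ultimately show ?thesis using cw(2) by (simp add: alt_weight_Cons algebra_simps)
  qed
  then have "\<forall>w\<in>lang_of_length d (Suc n).
      int (rank d w) = alt_weight d w + (int t + int (d 0) * int (H d n) - 1 - C)"
    by (blast elim: lang_of_length_SucE)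
  then show ?case ..
qed

lemma Gamma_eq_rank_diff:
  assumes "A \<in> lang d" "B \<in> lang d" "alt_less A B"
  shows "int (Gamma d A B) = int (rank d B) - int (rank d A) + 1"
proof -
  define L where "L = lang_of_length d (length A)"
  have lB: "length B = length A" using assms(3) alt_less_length by simp
  define between where "between = {X \<in> L. alt_le A X \<and> alt_le X B}"
  have split: "insert B {X \<in> L. alt_less X B} = between \<union> {X \<in> L. alt_less X A}"
  proof -
    have "X \<in> between \<or> alt_less X A" if "X \<in> L" "alt_le X B" for X
      using that alt_less_linear[of A X] unfolding between_def alt_le_def L_def lang_of_length_def
      by auto
    moreover have "alt_less X B" if "alt_less X A" for X
      using that assms(3) alt_less_trans by blast
    ultimately show ?thesis
      using assms(2) lB unfolding between_def alt_le_def L_def lang_of_length_def by auto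
  qed
  have disjoint: "between \<inter> {X \<in> L. alt_less X A} = {}"
    using alt_less_irrefl alt_less_trans unfolding between_def alt_le_def by blast
  have "finite L" unfolding L_def by (rule finite_lang_of_length)
  then have "card {X \<in> L. alt_less X B} + 1 = card (insert B {X \<in> L. alt_less X B})"
    using alt_less_irrefl by simp
  also have "\<dots> = card between + card {X \<in> L. alt_less X A}"
    unfolding split using \<open>finite L\<close> disjoint
    by (intro card_Un_disjoint) (simp_all add: between_def)
  finally have "card {X \<in> L. alt_less X B} + 1 = card between + card {X \<in> L. alt_less X A}" .
  moreover have "card between = Gamma d A B"
    unfolding between_def Gamma_def L_def lang_of_length_def by simp
  ultimately show ?thesis
    unfolding rank_def L_def lB by simp
qed

theorem lemma1:
  fixes d :: "nat \<Rightarrow> nat" and A B :: "nat list" and n :: nat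
  assumes "alt_lyndon d"
    and "A \<in> lang d" and "B \<in> lang d"
    and "length A = n" and "length B = n"
    and "alt_less A B"
  shows "int (Gamma d A B) =
    (\<Sum>i=1..n. (-1::int)^i * (int (B ! (i - 1)) - int (A ! (i - 1))) * int (H d (n - i))) + 1"
proof -
  obtain C where C: "\<forall>w\<in>lang_of_length d n. int (rank d w) = alt_weight d w + C"
    using rank_eq_alt_weight_plus_const by blast
  have "int (Gamma d A B) = alt_weight d B - alt_weight d A + 1"
    using Gamma_eq_rank_diff[OF assms(2,3,6)] C assms(2-5) unfolding lang_of_length_def by simp
  also have "alt_weight d B - alt_weight d A
      = (\<Sum>k<n. (-1)^(k+1) * (int (B ! k) - int (A ! k)) * int (H d (n - 1 - k)))"
    unfolding alt_weight_def using assms(4,5) by (simp add: sum_subtractf[symmetric] algebra_simps)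
  also have "\<dots> = (\<Sum>i=1..n. (-1)^i * (int (B ! (i - 1)) - int (A ! (i - 1))) * int (H d (n - i)))"
    by (simp only: One_nat_def sum.atLeast1_atMost_eq) simp
  finally show ?thesis .
qed

end
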